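(* Let $\Gamma=K_{r,t}$ be the complete bipartite graph with parts of sizes $r$ and $t$, where $t\le r$. For every integer $k\in\{2-r,\dots,r\}$: (a) if $k\ge t+1$, then $\gamma_k^o(\Gamma)=r$; (b) if $k\le t$ and $\left\lceil\frac{r+k}{2}\right\rceil+\left\lceil\frac{t+k}{2}\right\rceil\ge t$, then $\gamma_k^o(\Gamma)=t$; (c) if $-t<k\le t$ and $\left\lceil\frac{r+k}{2}\right\rceil+\left\lceil\frac{t+k}{2}\right\rceil< t$, then $\gamma_k^o(\Gamma)=\left\lceil\frac{r+k}{2}\right\rceil+\left\lceil\frac{t+k}{2}\right\rceil$; (d) if $k\le -t$ and $\left\lceil\frac{r+k}{2}\right\rceil+\left\lceil\frac{t+k}{2}\right\rceil< t$, then $\gamma_k^o(\Gamma)=\min\{t,1+\left\lceil\frac{r+k}{2}\right\rceil\}$.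
   Context: Graphs are finite and simple. For a graph $\Gamma=(V,E)$, $S\subseteq V$ and $v\in V$, $\delta_S(v)$ denotes the number of neighbours of $v$ in $S$, $\overline{S}=V\setminus S$, and $\partial(S)$ is the set of vertices of $\overline{S}$ having at least one neighbour in $S$. For an integer $k$, a nonempty set $S\subseteq V$ is an offensive $k$-alliance if $\delta_S(v)\ge\delta_{\overline{S}}(v)+k$ for every $v\in\partial(S)$. It is a global offensive $k$-alliance if moreover it is a dominating set (every vertex of $\overline{S}$ has a neighbour in $S$). $\gamma_k^o(\Gamma)$ denotes the minimum cardinality of a global offensive $k$-alliance in $\Gamma$. *)

theory Defs
  imports Complex_Main
begin

definition simple_graph :: "'a set \<Rightarrow> ('a \<Rightarrow> 'a \<Rightarrow> bool) \<Rightarrow> bool" where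
  "simple_graph V E \<longleftrightarrow> finite V \<and> (\<forall>u v. E u v \<longrightarrow> u \<in> V \<and> v \<in> V)
     \<and> (\<forall>u v. E u v \<longrightarrow> E v u) \<and> (\<forall>v. \<not> E v v)"

definition delta :: "('a \<Rightarrow> 'a \<Rightarrow> bool) \<Rightarrow> 'a set \<Rightarrow> 'a \<Rightarrow> nat" where
  "delta E S v = card {u \<in> S. E v u}"

definition boundary :: "'a set \<Rightarrow> ('a \<Rightarrow> 'a \<Rightarrow> bool) \<Rightarrow> 'a set \<Rightarrow> 'a set" where
  "boundary V E S = {v \<in> V - S. \<exists>u\<in>S. E v u}"

definition offensive_alliance :: "'a set \<Rightarrow> ('a \<Rightarrow> 'a \<Rightarrow> bool) \<Rightarrow> int \<Rightarrow> 'a set \<Rightarrow> bool" where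
  "offensive_alliance V E k S \<longleftrightarrow> S \<subseteq> V \<and> S \<noteq> {} \<and>
     (\<forall>v \<in> boundary V E S. int (delta E S v) \<ge> int (delta E (V - S) v) + k)"

definition dominating :: "'a set \<Rightarrow> ('a \<Rightarrow> 'a \<Rightarrow> bool) \<Rightarrow> 'a set \<Rightarrow> bool" where
  "dominating V E S \<longleftrightarrow> S \<subseteq> V \<and> (\<forall>v \<in> V - S. \<exists>u\<in>S. E v u)"

definition global_offensive_alliance :: "'a set \<Rightarrow> ('a \<Rightarrow> 'a \<Rightarrow> bool) \<Rightarrow> int \<Rightarrow> 'a set \<Rightarrow> bool" where
  "global_offensive_alliance V E k S \<longleftrightarrow> offensive_alliance V E k S \<and> dominating V E S"

definition gamma_o :: "'a set \<Rightarrow> ('a \<Rightarrow> 'a \<Rightarrow> bool) \<Rightarrow> int \<Rightarrow> nat" where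
  "gamma_o V E k = Min (card ` {S. global_offensive_alliance V E k S})"

definition Kbip_V :: "nat \<Rightarrow> nat \<Rightarrow> (nat + nat) set" where
  "Kbip_V r t = Inl ` {..<r} \<union> Inr ` {..<t}"

definition Kbip_E :: "nat \<Rightarrow> nat \<Rightarrow> (nat + nat) \<Rightarrow> (nat + nat) \<Rightarrow> bool" where
  "Kbip_E r t x y \<longleftrightarrow> x \<in> Kbip_V r t \<and> y \<in> Kbip_V r t \<and>
     ((isl x \<and> \<not> isl y) \<or> (\<not> isl x \<and> isl y))"

end

theory Submission
  imports Defs
begin

text \<open>In \<open>K\<^sub>r\<^sub>,\<^sub>t\<close> every vertex outside S sees exactly the vertices of the other part, so
whether S is a global offensive k-alliance depends only on the numbers a and b of vertices of S
in the parts of sizes r and t: an outside vertex of the first part needs \<open>b \<ge> 1\<close> and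
\<open>b \<ge> (t - b) + k\<close>, i.e. \<open>b \<ge> \<lceil>(t + k)/2\<rceil>\<close>, and symmetrically for the second part.
Then \<open>\<gamma>\<^sub>k\<^sup>o\<close> is the least value of a + b over the admissible pairs, which is attained either by
taking a whole part or by taking \<open>a = \<lceil>(r + k)/2\<rceil>\<close> together with the least admissible b.\<close>

lemma global_offensive_alliance_iff:
  assumes "finite V"
  shows "global_offensive_alliance V E k S \<longleftrightarrow> S \<subseteq> V \<and> S \<noteq> {} \<and>
    (\<forall>v \<in> V - S. 0 < delta E S v \<and> int (delta E (V - S) v) + k \<le> int (delta E S v))"
proof -
  have "0 < delta E S v \<longleftrightarrow> (\<exists>u\<in>S. E v u)" if "S \<subseteq> V" for v
    using finite_subset[OF that assms] unfolding delta_def by (auto simp: card_gt_0_iff)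
  then show ?thesis
    unfolding global_offensive_alliance_def offensive_alliance_def dominating_def boundary_def
    by blast
qed

lemma card_Int_less_iff:
  assumes "finite A"
  shows "card (S \<inter> A) < card A \<longleftrightarrow> A - S \<noteq> {}"
proof
  assume "card (S \<inter> A) < card A"
  then show "A - S \<noteq> {}" by (metis Diff_eq_empty_iff inf.absorb2 less_irrefl)
next
  assume "A - S \<noteq> {}"
  then have "S \<inter> A \<subset> A" by blast
  then show "card (S \<inter> A) < card A" using assms by (simp add: psubset_card_mono)
qed

text \<open>The arguments a and b count the vertices of an alliance in the parts of size r and t.\<close>

definition Kbip_admissible :: "nat \<Rightarrow> nat \<Rightarrow> int \<Rightarrow> nat \<Rightarrow> nat \<Rightarrow> bool" where
  "Kbip_admissible r t k a b \<longleftrightarrow> 0 < a + b \<and>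
     (a < r \<longrightarrow> 0 < b \<and> int t + k \<le> 2 * int b) \<and>
     (b < t \<longrightarrow> 0 < a \<and> int r + k \<le> 2 * int a)"

lemma card_Kbip_V_subset:
  assumes "S \<subseteq> Kbip_V r t"
  shows "card S = card (S \<inter> Inl ` {..<r}) + card (S \<inter> Inr ` {..<t})"
proof -
  have "S = (S \<inter> Inl ` {..<r}) \<union> (S \<inter> Inr ` {..<t})"
    using assms unfolding Kbip_V_def by blast
  moreover have "(S \<inter> Inl ` {..<r}) \<inter> (S \<inter> Inr ` {..<t}) = {}" by blast
  ultimately show ?thesis by (metis card_Un_disjoint finite_Int finite_imageI finite_lessThan)
qed

lemma Kbip_Inl_outside_alliance_iff:
  fixes S :: "(nat + nat) set" and r t :: nat
  defines "a \<equiv> card (S \<inter> Inl ` {..<r})" and "b \<equiv> card (S \<inter> Inr ` {..<t})"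
  shows "(\<forall>v \<in> Inl ` {..<r} - S. 0 < delta (Kbip_E r t) S v \<and>
      int (delta (Kbip_E r t) (Kbip_V r t - S) v) + k \<le> int (delta (Kbip_E r t) S v))
    \<longleftrightarrow> (a < r \<longrightarrow> 0 < b \<and> int t + k \<le> 2 * int b)"
proof -
  have delta_eq: "delta (Kbip_E r t) X v = card (X \<inter> Inr ` {..<t})" if "v \<in> Inl ` {..<r}" for X v
    using that unfolding delta_def Kbip_E_def Kbip_V_def by (intro arg_cong[where f = card]) auto
  have "(Kbip_V r t - S) \<inter> Inr ` {..<t} = Inr ` {..<t} - (Inr ` {..<t} \<inter> S)"
    unfolding Kbip_V_def by blast
  moreover have "b \<le> t"
    unfolding b_def using card_mono[OF _ Int_lower2, of "Inr ` {..<t}" S] by (simp add: card_image)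
  moreover have "Inl ` {..<r} - S \<noteq> {} \<longleftrightarrow> a < r"
    using card_Int_less_iff[of "Inl ` {..<r}" S] unfolding a_def by (simp add: card_image)
  ultimately have "\<forall>v \<in> Inl ` {..<r} - S. delta (Kbip_E r t) S v = b \<and>
      delta (Kbip_E r t) (Kbip_V r t - S) v = t - b"
    unfolding b_def by (simp add: delta_eq card_Diff_subset Int_commute card_image)
  then show ?thesis using \<open>Inl ` {..<r} - S \<noteq> {} \<longleftrightarrow> a < r\<close> \<open>b \<le> t\<close> by auto
qed

lemma Kbip_Inr_outside_alliance_iff:
  fixes S :: "(nat + nat) set" and r t :: nat
  defines "a \<equiv> card (S \<inter> Inl ` {..<r})" and "b \<equiv> card (S \<inter> Inr ` {..<t})"
  shows "(\<forall>v \<in> Inr ` {..<t} - S. 0 < delta (Kbip_E r t) S v \<and>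
      int (delta (Kbip_E r t) (Kbip_V r t - S) v) + k \<le> int (delta (Kbip_E r t) S v))
    \<longleftrightarrow> (b < t \<longrightarrow> 0 < a \<and> int r + k \<le> 2 * int a)"
proof -
  have delta_eq: "delta (Kbip_E r t) X v = card (X \<inter> Inl ` {..<r})" if "v \<in> Inr ` {..<t}" for X v
    using that unfolding delta_def Kbip_E_def Kbip_V_def by (intro arg_cong[where f = card]) auto
  have "(Kbip_V r t - S) \<inter> Inl ` {..<r} = Inl ` {..<r} - (Inl ` {..<r} \<inter> S)"
    unfolding Kbip_V_def by blast
  moreover have "a \<le> r"
    unfolding a_def using card_mono[OF _ Int_lower2, of "Inl ` {..<r}" S] by (simp add: card_image)
  moreover have "Inr ` {..<t} - S \<noteq> {} \<longleftrightarrow> b < t"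
    using card_Int_less_iff[of "Inr ` {..<t}" S] unfolding b_def by (simp add: card_image)
  ultimately have "\<forall>v \<in> Inr ` {..<t} - S. delta (Kbip_E r t) S v = a \<and>
      delta (Kbip_E r t) (Kbip_V r t - S) v = r - a"
    unfolding a_def by (simp add: delta_eq card_Diff_subset Int_commute card_image)
  then show ?thesis using \<open>Inr ` {..<t} - S \<noteq> {} \<longleftrightarrow> b < t\<close> \<open>a \<le> r\<close> by auto
qed

lemma global_offensive_alliance_Kbip_iff:
  assumes S: "S \<subseteq> Kbip_V r t"
  shows "global_offensive_alliance (Kbip_V r t) (Kbip_E r t) k S \<longleftrightarrow>
    Kbip_admissible r t k (card (S \<inter> Inl ` {..<r})) (card (S \<inter> Inr ` {..<t}))"
proof -
  let ?V = "Kbip_V r t" and ?E = "Kbip_E r t"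
  let ?ok = "\<lambda>v. 0 < delta ?E S v \<and> int (delta ?E (?V - S) v) + k \<le> int (delta ?E S v)"
  have "finite ?V" by (simp add: Kbip_V_def)
  have "S \<noteq> {} \<longleftrightarrow> 0 < card (S \<inter> Inl ` {..<r}) + card (S \<inter> Inr ` {..<t})"
    using card_Kbip_V_subset[OF S] finite_subset[OF S \<open>finite ?V\<close>] by (auto simp: card_gt_0_iff)
  moreover have "?V - S = (Inl ` {..<r} - S) \<union> (Inr ` {..<t} - S)"
    unfolding Kbip_V_def by blast
  then have "(\<forall>v \<in> ?V - S. ?ok v) \<longleftrightarrow> (\<forall>v \<in> Inl ` {..<r} - S. ?ok v) \<and> (\<forall>v \<in> Inr ` {..<t} - S. ?ok v)"
    by (simp only: ball_Un)
  ultimately show ?thesis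
    unfolding global_offensive_alliance_iff[OF \<open>finite ?V\<close>] Kbip_admissible_def
      Kbip_Inl_outside_alliance_iff Kbip_Inr_outside_alliance_iff
    using S by simp
qed

lemma gamma_o_Kbip_eqI:
  assumes "a \<le> r" "b \<le> t" "Kbip_admissible r t k a b"
    and minimal: "\<And>a' b'. a' \<le> r \<Longrightarrow> b' \<le> t \<Longrightarrow> Kbip_admissible r t k a' b' \<Longrightarrow> a + b \<le> a' + b'"
  shows "gamma_o (Kbip_V r t) (Kbip_E r t) k = a + b"
proof -
  let ?A = "{S. global_offensive_alliance (Kbip_V r t) (Kbip_E r t) k S}"
  define S where "S = (Inl ` {..<a} \<union> Inr ` {..<b} :: (nat + nat) set)"
  have "S \<subseteq> Kbip_V r t" "S \<inter> Inl ` {..<r} = Inl ` {..<a}" "S \<inter> Inr ` {..<t} = Inr ` {..<b}"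
    using assms(1,2) by (auto simp: S_def Kbip_V_def)
  then have "S \<in> ?A" and "card S = a + b"
    using global_offensive_alliance_Kbip_iff[of S r t k] card_Kbip_V_subset[of S r t] assms(3)
    by (simp_all add: card_image)
  then have "a + b \<in> card ` ?A" by force
  moreover have "a + b \<le> card T" if "T \<in> ?A" for T
  proof -
    have T: "T \<subseteq> Kbip_V r t"
      using that by (simp add: global_offensive_alliance_def dominating_def)
    have "card (T \<inter> Inl ` {..<r}) \<le> card (Inl ` {..<r} :: (nat + nat) set)"
      and "card (T \<inter> Inr ` {..<t}) \<le> card (Inr ` {..<t} :: (nat + nat) set)"
      by (simp_all add: card_mono)
    then show ?thesis
      using minimal global_offensive_alliance_Kbip_iff[OF T] card_Kbip_V_subset[OF T] that
      by (simp add: card_image)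
  qed
  moreover have "finite (card ` ?A)"
  proof -
    have "?A \<subseteq> Pow (Kbip_V r t)"
      by (auto simp: global_offensive_alliance_def dominating_def)
    then show ?thesis by (rule finite_imageI[OF finite_subset]) (simp add: Kbip_V_def)
  qed
  ultimately show ?thesis
    unfolding gamma_o_def by (auto intro: Min_eqI)
qed

lemma ceiling_half_le_iff: "\<lceil>real_of_int n / 2\<rceil> \<le> m \<longleftrightarrow> n \<le> 2 * m"
  proof -
  have "real_of_int n \<le> real_of_int (2 * m) \<longleftrightarrow> n \<le> 2 * m" by (rule of_int_le_iff)
  then show ?thesis by (simp add: ceiling_le_iff field_simps)
qed

lemma ceiling_half_bounds:
  "n \<le> 2 * \<lceil>real_of_int n / 2\<rceil>" "2 * \<lceil>real_of_int n / 2\<rceil> \<le> n + 1"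
  using ceiling_half_le_iff[of n "\<lceil>real_of_int n / 2\<rceil>"]
    ceiling_half_le_iff[of n "\<lceil>real_of_int n / 2\<rceil> - 1"] by simp_all

lemma gamma_o_Kbip_large_k:
  assumes "int t + 1 \<le> k" "k \<le> int r"
  shows "gamma_o (Kbip_V r t) (Kbip_E r t) k = r"
proof -
  have "gamma_o (Kbip_V r t) (Kbip_E r t) k = r + 0"
  proof (rule gamma_o_Kbip_eqI)
    show "Kbip_admissible r t k r 0" using assms by (auto simp: Kbip_admissible_def)
    fix a b assume "a \<le> r" "b \<le> t" "Kbip_admissible r t k a b"
    then show "r + 0 \<le> a + b" using assms by (auto simp: Kbip_admissible_def not_less)
  qed simp_all
  then show ?thesis by simp
qed

lemma gamma_o_Kbip_eq_small_part:
  assumes "1 \<le> t" "t \<le> r" "k \<le> int t"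
    and "int t \<le> \<lceil>real_of_int (int r + k) / 2\<rceil> + \<lceil>real_of_int (int t + k) / 2\<rceil>"
  shows "gamma_o (Kbip_V r t) (Kbip_E r t) k = t"
proof -
  have "gamma_o (Kbip_V r t) (Kbip_E r t) k = 0 + t"
  proof (rule gamma_o_Kbip_eqI)
    show "Kbip_admissible r t k 0 t" using assms by (auto simp: Kbip_admissible_def)
    fix a b assume "a \<le> r" "b \<le> t" "Kbip_admissible r t k a b"
    then show "0 + t \<le> a + b"
      using assms ceiling_half_le_iff[of "int r + k" "int a"] ceiling_half_le_iff[of "int t + k" "int b"]
      by (auto simp: Kbip_admissible_def not_less)
  qed simp_all
  then show ?thesis by simp
qed

lemma gamma_o_Kbip_eq_ceiling_sum:
  assumes "- int t < k" "k \<le> int t" "t \<le> r"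
    and "\<lceil>real_of_int (int r + k) / 2\<rceil> + \<lceil>real_of_int (int t + k) / 2\<rceil> < int t"
  shows "int (gamma_o (Kbip_V r t) (Kbip_E r t) k)
    = \<lceil>real_of_int (int r + k) / 2\<rceil> + \<lceil>real_of_int (int t + k) / 2\<rceil>"
proof -
  define \<alpha> \<beta> where "\<alpha> = \<lceil>real_of_int (int r + k) / 2\<rceil>" and "\<beta> = \<lceil>real_of_int (int t + k) / 2\<rceil>"
  note bounds = ceiling_half_bounds[of "int r + k", folded \<alpha>_def]
    ceiling_half_bounds[of "int t + k", folded \<beta>_def]
  have "1 \<le> \<alpha>" "\<alpha> \<le> int r" "1 \<le> \<beta>" "\<beta> \<le> int t" using assms bounds by linarith+
  have "gamma_o (Kbip_V r t) (Kbip_E r t) k = nat \<alpha> + nat \<beta>"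
  proof (rule gamma_o_Kbip_eqI)
    show "nat \<alpha> \<le> r" "nat \<beta> \<le> t" "Kbip_admissible r t k (nat \<alpha>) (nat \<beta>)"
      using \<open>1 \<le> \<alpha>\<close> \<open>\<alpha> \<le> int r\<close> \<open>1 \<le> \<beta>\<close> \<open>\<beta> \<le> int t\<close> bounds
      by (auto simp: Kbip_admissible_def)
    fix a b assume "a \<le> r" "b \<le> t" "Kbip_admissible r t k a b"
    then have "\<alpha> + \<beta> \<le> int a + int b"
      using assms(3,4) ceiling_half_le_iff[of "int r + k" "int a", folded \<alpha>_def]
        ceiling_half_le_iff[of "int t + k" "int b", folded \<beta>_def]
      unfolding \<alpha>_def[symmetric] \<beta>_def[symmetric] by (auto simp: Kbip_admissible_def not_less)
    then show "nat \<alpha> + nat \<beta> \<le> a + b" using \<open>1 \<le> \<alpha>\<close> \<open>1 \<le> \<beta>\<close> by linarith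
  qed
  then show ?thesis using \<open>1 \<le> \<alpha>\<close> \<open>1 \<le> \<beta>\<close> unfolding \<alpha>_def \<beta>_def by simp
qed

lemma gamma_o_Kbip_very_negative_k:
  assumes "1 \<le> t" "t \<le> r" "2 - int r \<le> k" "k \<le> - int t"
  shows "int (gamma_o (Kbip_V r t) (Kbip_E r t) k) = min (int t) (1 + \<lceil>real_of_int (int r + k) / 2\<rceil>)"
proof -
  define \<alpha> where "\<alpha> = \<lceil>real_of_int (int r + k) / 2\<rceil>"
  note bounds = ceiling_half_bounds[of "int r + k", folded \<alpha>_def]
  have "1 \<le> \<alpha>" "\<alpha> \<le> int r" using assms bounds by linarith+
  have lower: "min (int t) (1 + \<alpha>) \<le> int a + int b"
    if "a \<le> r" "b \<le> t" "Kbip_admissible r t k a b" for a b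
    using that assms ceiling_half_le_iff[of "int r + k" "int a"]
    unfolding \<alpha>_def by (auto simp: Kbip_admissible_def not_less)
  show ?thesis
  proof (cases "int t \<le> 1 + \<alpha>")
    case True
    have "gamma_o (Kbip_V r t) (Kbip_E r t) k = 0 + t"
    proof (rule gamma_o_Kbip_eqI)
      show "Kbip_admissible r t k 0 t" using assms by (auto simp: Kbip_admissible_def)
      show "0 + t \<le> a + b" if "a \<le> r" "b \<le> t" "Kbip_admissible r t k a b" for a b
        using lower[OF that] True by linarith
    qed simp_all
    then show ?thesis using True unfolding \<alpha>_def by simp
  next
    case False
    have "gamma_o (Kbip_V r t) (Kbip_E r t) k = nat \<alpha> + 1"
    proof (rule gamma_o_Kbip_eqI)
      show "nat \<alpha> \<le> r" "1 \<le> t" using \<open>\<alpha> \<le> int r\<close> assms(1) by simp_all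
      show "Kbip_admissible r t k (nat \<alpha>) 1"
        using assms \<open>1 \<le> \<alpha>\<close> bounds by (auto simp: Kbip_admissible_def)
      show "nat \<alpha> + 1 \<le> a + b" if "a \<le> r" "b \<le> t" "Kbip_admissible r t k a b" for a b
        using lower[OF that] False \<open>1 \<le> \<alpha>\<close> by linarith
    qed
    then show ?thesis using False \<open>1 \<le> \<alpha>\<close> unfolding \<alpha>_def by simp
  qed
qed

theorem mainTheorem1:
  fixes r t :: nat and k :: int
  assumes "1 \<le> t" and "t \<le> r"
    and "2 - int r \<le> k" and "k \<le> int r"
  defines "c \<equiv> \<lceil>real_of_int (int r + k) / 2\<rceil> + \<lceil>real_of_int (int t + k) / 2\<rceil>"
  shows "(k \<ge> int t + 1 \<longrightarrow> gamma_o (Kbip_V r t) (Kbip_E r t) k = r)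
    \<and> (k \<le> int t \<and> c \<ge> int t \<longrightarrow> gamma_o (Kbip_V r t) (Kbip_E r t) k = t)
    \<and> (- int t < k \<and> k \<le> int t \<and> c < int t \<longrightarrow>
         int (gamma_o (Kbip_V r t) (Kbip_E r t) k) = c)
    \<and> (k \<le> - int t \<and> c < int t \<longrightarrow>
         int (gamma_o (Kbip_V r t) (Kbip_E r t) k)
           = min (int t) (1 + \<lceil>real_of_int (int r + k) / 2\<rceil>))"
  using assms gamma_o_Kbip_large_k[of t k r] gamma_o_Kbip_eq_small_part[of t r k]
    gamma_o_Kbip_eq_ceiling_sum[of t k r] gamma_o_Kbip_very_negative_k[of t r k]
  unfolding c_def by blast

end
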